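(* In the setting of the context, if $D<a-3$ then the quadric fibration $\pi:\widetilde{X}_{(a,1,1);D}\to\mathbb{P}^1$ has generic corank $\geq1$.
   Context: Let $a,D\geq1$, masses $m_1^2,\dots,m_{a+2}^2>0$ and vectors $p,k_1,\dots,k_a\in\mathbb{C}^D$; set $r_i^2=(p+\sum_{j=1}^{i-1}k_j)^2$ and $q_{ij}^2=(\sum_{r=i}^{j-1}k_r)^2$ for $i<j$. On $\mathbb{P}^{a+1}$ with coordinates $y_1,\dots,y_a,x,z$, the graph hypersurface of type $(a,1,1)$ is $X_{(a,1,1);D}=V(\mathbf{F})$ with $\mathbf{U}=(z+x)\sum_iy_i+zx$, $\mathbf{V}=(z+x)\sum_{i<j}q_{ij}^2y_iy_j+zx\sum_jr_j^2y_j$, $\mathbf{F}=\mathbf{U}(\sum_im_i^2y_i+m_{a+1}^2x+m_{a+2}^2z)-\mathbf{V}$. $\widetilde{X}_{(a,1,1);D}$ is its strict transform in the blow-up of $\mathbb{P}^{a+1}$ along $V(x,z)$, i.e. the hypersurface in homogeneous coordinates $(y_1,\dots,y_a,x,z,w)$ (blow-down map $[y:xw:zw]$) given by $\widetilde{\mathbf{U}}(\sum_im_i^2y_i+m_{a+1}^2xw+m_{a+2}^2zw)-\widetilde{\mathbf{V}}$ with $\widetilde{\mathbf{U}}=(z+x)\sum_iy_i+zxw$, $\widetilde{\mathbf{V}}=(z+x)\sum_{i<j}q_{ij}^2y_iy_j+zxw\sum_jr_j^2y_j$. The map $\pi$ is $[x:z]$; each fibre is a quadric in $\mathbb{P}^a$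 (coordinates $y_1,\dots,y_a,w$), and the generic corank of $\pi$ is the corank of the fibre quadratic form at a general point of $\mathbb{P}^1$. *)

theory Defs
  imports Complex_Main "Jordan_Normal_Form.DL_Rank"
begin

text \<open>Vectors in C^D are functions nat => complex, components indexed by l < D.
 The square uses the complex bilinear (Minkowski-free, Euclidean) product v^2 = sum_l v_l^2.\<close>

definition sqC :: "nat \<Rightarrow> (nat \<Rightarrow> complex) \<Rightarrow> complex" where
  "sqC D v = (\<Sum>l<D. v l * v l)"

definition rsq :: "nat \<Rightarrow> (nat \<Rightarrow> complex) \<Rightarrow> (nat \<Rightarrow> nat \<Rightarrow> complex) \<Rightarrow> nat \<Rightarrow> complex" where
  "rsq D p k i = sqC D (\<lambda>l. p l + (\<Sum>j\<in>{1..<i}. k j l))"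

definition qsq :: "nat \<Rightarrow> (nat \<Rightarrow> nat \<Rightarrow> complex) \<Rightarrow> nat \<Rightarrow> nat \<Rightarrow> complex" where
  "qsq D k i j = sqC D (\<lambda>l. \<Sum>r\<in>{i..<j}. k r l)"

text \<open>The defining polynomial of the strict transform, in coordinates (y_1..y_a, x, z, w);
 msq i stands for m_i^2.\<close>
definition Ftilde :: "nat \<Rightarrow> nat \<Rightarrow> (nat \<Rightarrow> real) \<Rightarrow> (nat \<Rightarrow> complex) \<Rightarrow> (nat \<Rightarrow> nat \<Rightarrow> complex)
    \<Rightarrow> (nat \<Rightarrow> complex) \<Rightarrow> complex \<Rightarrow> complex \<Rightarrow> complex \<Rightarrow> complex" where
  "Ftilde a D msq p k y x z w =
     (let U = (z + x) * (\<Sum>i\<in>{1..a}. y i) + z * x * w;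
          V = (z + x) * (\<Sum>(i,j)\<in>{(i,j). 1 \<le> i \<and> i < j \<and> j \<le> a}. qsq D k i j * y i * y j)
              + z * x * w * (\<Sum>j\<in>{1..a}. rsq D p k j * y j);
          L = (\<Sum>i\<in>{1..a}. complex_of_real (msq i) * y i)
              + complex_of_real (msq (a+1)) * x * w + complex_of_real (msq (a+2)) * z * w
      in U * L - V)"

text \<open>Fibre quadratic form over the point [x:z] of P^1, as a function of a vector
 v indexed by 0..a, where v (i-1) = y_i (1 <= i <= a) and v a = w.\<close>
definition fibre_form :: "nat \<Rightarrow> nat \<Rightarrow> (nat \<Rightarrow> real) \<Rightarrow> (nat \<Rightarrow> complex) \<Rightarrow> (nat \<Rightarrow> nat \<Rightarrow> complex)
    \<Rightarrow> complex \<Rightarrow> complex \<Rightarrow> (nat \<Rightarrow> complex) \<Rightarrow> complex" where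
  "fibre_form a D msq p k x z v = Ftilde a D msq p k (\<lambda>i. v (i - 1)) x z (v a)"

definition unitv :: "nat \<Rightarrow> nat \<Rightarrow> complex" where
  "unitv i = (\<lambda>t. if t = i then 1 else 0)"

definition fibre_mat :: "nat \<Rightarrow> nat \<Rightarrow> (nat \<Rightarrow> real) \<Rightarrow> (nat \<Rightarrow> complex) \<Rightarrow> (nat \<Rightarrow> nat \<Rightarrow> complex)
    \<Rightarrow> complex \<Rightarrow> complex \<Rightarrow> complex mat" where
  "fibre_mat a D msq p k x z =
     mat (a+1) (a+1) (\<lambda>(i,j). (fibre_form a D msq p k x z (\<lambda>t. unitv i t + unitv j t)
        - fibre_form a D msq p k x z (unitv i) - fibre_form a D msq p k x z (unitv j)) / 2)"

definition fibre_corank :: "nat \<Rightarrow> nat \<Rightarrow> (nat \<Rightarrow> real) \<Rightarrow> (nat \<Rightarrow> complex) \<Rightarrow> (nat \<Rightarrow> nat \<Rightarrow> complex)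
    \<Rightarrow> complex \<Rightarrow> complex \<Rightarrow> nat" where
  "fibre_corank a D msq p k x z = (a + 1) - vec_space.rank (a+1) (fibre_mat a D msq p k x z)"

text \<open>Generic corank of pi: the corank at a general point of P^1. By lower semicontinuity
 of rank this is the minimum of the fibre corank over all points [x:z] of P^1.\<close>
definition generic_corank :: "nat \<Rightarrow> nat \<Rightarrow> (nat \<Rightarrow> real) \<Rightarrow> (nat \<Rightarrow> complex) \<Rightarrow> (nat \<Rightarrow> nat \<Rightarrow> complex) \<Rightarrow> nat" where
  "generic_corank a D msq p k =
     (LEAST c. \<exists>x z. (x, z) \<noteq> (0, 0) \<and> fibre_corank a D msq p k x z = c)"

end

theory Submission
  imports Defs
begin

(* Write K_i = k_1 + ... + k_(i-1), so that r_i = p + K_i and q_ij = K_j - K_i. The Lagrange-type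
   identity  sum_(i<j) (K_j - K_i)^2 y_i y_j = (sum_i K_i^2 y_i)(sum_i y_i) - (sum_i K_i y_i)^2
   shows that over each point [x:z] the fibre form is a quadratic form in only D + 3 linear forms
   of (y, w): the D components of sum_i K_i y_i, sum_i y_i, w and sum_i (m_i^2 - K_i^2) y_i.
   Its Gram matrix therefore has rank at most D + 3 < a + 1, so every fibre, in particular the
   general one, is singular. *)

lemma rank_mat_sum_products_le:
  fixes f g :: "nat \<Rightarrow> nat \<Rightarrow> complex"
  shows "vec_space.rank n (mat n n (\<lambda>(i,j). \<Sum>\<alpha><N. f \<alpha> i * g \<alpha> j)) \<le> N"
proof (induction N)
  case 0
  have "mat n n (\<lambda>(i,j). \<Sum>\<alpha><0. f \<alpha> i * g \<alpha> j) = (0\<^sub>m n n :: complex mat)"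
    by (rule eq_matI) auto
  then show ?case by (metis vec_space.rank_0I le_refl)
next
  case (Suc N)
  have split: "mat n n (\<lambda>(i,j). \<Sum>\<alpha><Suc N. f \<alpha> i * g \<alpha> j) =
     mat n n (\<lambda>(i,j). \<Sum>\<alpha><N. f \<alpha> i * g \<alpha> j) + mat n n (\<lambda>(i,j). f N i * g N j)"
    by (rule eq_matI) auto
  have "vec_space.rank n (mat n n (\<lambda>(i,j). f N i * g N j)) \<le> 1"
    by (rule vec_space.rank_le_1_product_entries[where f="f N" and g="g N" and nc=n]) auto
  moreover have "vec_space.rank n (mat n n (\<lambda>(i,j). \<Sum>\<alpha><Suc N. f \<alpha> i * g \<alpha> j)) \<le>
     vec_space.rank n (mat n n (\<lambda>(i,j). \<Sum>\<alpha><N. f \<alpha> i * g \<alpha> j))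
       + vec_space.rank n (mat n n (\<lambda>(i,j). f N i * g N j))"
    unfolding split by (rule vec_space.rank_subadditive) auto
  ultimately show ?case using Suc.IH by linarith
qed

lemma polarization_quadratic_sum:
  fixes C :: "nat \<Rightarrow> nat \<Rightarrow> complex"
  shows "((\<Sum>\<alpha><N. (u \<alpha> + v \<alpha>) * (\<Sum>\<beta><N. C \<alpha> \<beta> * (u \<beta> + v \<beta>)))
        - (\<Sum>\<alpha><N. u \<alpha> * (\<Sum>\<beta><N. C \<alpha> \<beta> * u \<beta>))
        - (\<Sum>\<alpha><N. v \<alpha> * (\<Sum>\<beta><N. C \<alpha> \<beta> * v \<beta>))) / 2
       = (\<Sum>\<alpha><N. u \<alpha> * ((\<Sum>\<beta><N. (C \<alpha> \<beta> + C \<beta> \<alpha>) * v \<beta>) / 2))"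
proof -
  have swap: "(\<Sum>\<alpha><N. \<Sum>\<beta><N. v \<alpha> * C \<alpha> \<beta> * u \<beta>) = (\<Sum>\<alpha><N. \<Sum>\<beta><N. u \<alpha> * C \<beta> \<alpha> * v \<beta>)"
    by (subst sum.swap) (simp add: mult_ac)
  have "(\<Sum>\<alpha><N. (u \<alpha> + v \<alpha>) * (\<Sum>\<beta><N. C \<alpha> \<beta> * (u \<beta> + v \<beta>)))
        - (\<Sum>\<alpha><N. u \<alpha> * (\<Sum>\<beta><N. C \<alpha> \<beta> * u \<beta>))
        - (\<Sum>\<alpha><N. v \<alpha> * (\<Sum>\<beta><N. C \<alpha> \<beta> * v \<beta>))
      = (\<Sum>\<alpha><N. \<Sum>\<beta><N. u \<alpha> * C \<alpha> \<beta> * v \<beta>) + (\<Sum>\<alpha><N. \<Sum>\<beta><N. v \<alpha> * C \<alpha> \<beta> * u \<beta>)"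
    by (simp add: sum_distrib_left sum.distrib sum_subtractf algebra_simps)
  also have "\<dots> = (\<Sum>\<alpha><N. u \<alpha> * (\<Sum>\<beta><N. (C \<alpha> \<beta> + C \<beta> \<alpha>) * v \<beta>))"
    unfolding swap by (simp add: sum_distrib_left sum.distrib algebra_simps)
  finally show ?thesis by (simp add: sum_divide_distrib[symmetric])
qed

lemma rank_polarization_le:
  fixes Q :: "(nat \<Rightarrow> complex) \<Rightarrow> complex" and L :: "nat \<Rightarrow> (nat \<Rightarrow> complex) \<Rightarrow> complex"
  assumes Q: "\<And>v. Q v = (\<Sum>\<alpha><N. L \<alpha> v * (\<Sum>\<beta><N. C \<alpha> \<beta> * L \<beta> v))"
    and additive: "\<And>\<alpha> u v. L \<alpha> (\<lambda>t. u t + v t) = L \<alpha> u + L \<alpha> v"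
  shows "vec_space.rank n
           (mat n n (\<lambda>(i,j). (Q (\<lambda>t. unitv i t + unitv j t) - Q (unitv i) - Q (unitv j)) / 2)) \<le> N"
proof -
  define g where "g \<alpha> j = (\<Sum>\<beta><N. (C \<alpha> \<beta> + C \<beta> \<alpha>) * L \<beta> (unitv j)) / 2" for \<alpha> j
  have "mat n n (\<lambda>(i,j). (Q (\<lambda>t. unitv i t + unitv j t) - Q (unitv i) - Q (unitv j)) / 2)
      = mat n n (\<lambda>(i,j). \<Sum>\<alpha><N. L \<alpha> (unitv i) * g \<alpha> j)"
    unfolding Q additive g_def
    by (rule arg_cong[where f="mat n n"], rule ext, clarify, rule polarization_quadratic_sum)
  then show ?thesis by (simp only: rank_mat_sum_products_le)
qed

lemma sqC_add: "sqC D (\<lambda>l. u l + v l) = sqC D u + 2 * (\<Sum>l<D. u l * v l) + sqC D v"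
  unfolding sqC_def by (simp add: sum.distrib sum_distrib_left algebra_simps)

lemma sqC_diff: "sqC D (\<lambda>l. u l - v l) = sqC D u - 2 * (\<Sum>l<D. u l * v l) + sqC D v"
  unfolding sqC_def by (simp add: sum.distrib sum_subtractf sum_distrib_left algebra_simps)

lemma sqC_scale: "sqC D (\<lambda>l. c * u l) = c\<^sup>2 * sqC D u"
  unfolding sqC_def by (simp add: sum_distrib_left power2_eq_square algebra_simps)

definition partial_momentum :: "(nat \<Rightarrow> nat \<Rightarrow> complex) \<Rightarrow> nat \<Rightarrow> nat \<Rightarrow> complex" where
  "partial_momentum k i l = (\<Sum>r\<in>{1..<i}. k r l)"

lemma qsq_eq_sqC_partial_momentum:
  assumes "1 \<le> i" "i \<le> j"
  shows "qsq D k i j = sqC D (\<lambda>l. partial_momentum k j l - partial_momentum k i l)"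
proof -
  have "partial_momentum k j l = partial_momentum k i l + (\<Sum>r\<in>{i..<j}. k r l)" for l
    unfolding partial_momentum_def using assms by (metis sum.atLeastLessThan_concat)
  then show ?thesis unfolding qsq_def by simp
qed

lemma rsq_eq_sqC_partial_momentum:
  "rsq D p k j = sqC D p + 2 * (\<Sum>l<D. p l * partial_momentum k j l) + sqC D (partial_momentum k j)"
  unfolding rsq_def partial_momentum_def[symmetric] by (rule sqC_add)

lemma sum_pairs_sqC_diff:
  fixes K :: "nat \<Rightarrow> nat \<Rightarrow> complex"
  shows "(\<Sum>(i,j)\<in>{(i,j). 1 \<le> i \<and> i < j \<and> j \<le> a}. sqC D (\<lambda>l. K j l - K i l) * y i * y j)
    = (\<Sum>i\<in>{1..a}. sqC D (K i) * y i) * (\<Sum>i\<in>{1..a}. y i) - sqC D (\<lambda>l. \<Sum>i\<in>{1..a}. K i l * y i)"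
proof (induction a)
  case 0
  have no_pairs: "{(i,j). 1 \<le> i \<and> i < j \<and> j \<le> (0::nat)} = {}"
    by auto
  show ?case unfolding no_pairs by (simp add: sqC_def)
next
  case (Suc a)
  let ?pairs = "\<lambda>a. {(i,j). 1 \<le> i \<and> i < j \<and> (j::nat) \<le> a}"
  have pairs_Suc: "?pairs (Suc a) = ?pairs a \<union> (\<lambda>i. (i, Suc a)) ` {1..a}"
    by auto
  have "finite (?pairs a)"
    by (rule finite_subset[of _ "{1..a} \<times> {1..a}"]) auto
  then have "(\<Sum>(i,j)\<in>?pairs (Suc a). sqC D (\<lambda>l. K j l - K i l) * y i * y j)
    = (\<Sum>(i,j)\<in>?pairs a. sqC D (\<lambda>l. K j l - K i l) * y i * y j)
      + (\<Sum>i\<in>{1..a}. sqC D (\<lambda>l. K (Suc a) l - K i l) * y i * y (Suc a))"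
    unfolding pairs_Suc by (subst sum.union_disjoint) (auto simp: sum.reindex inj_on_def)
  also have "(\<Sum>i\<in>{1..a}. sqC D (\<lambda>l. K (Suc a) l - K i l) * y i * y (Suc a))
    = y (Suc a) * (sqC D (K (Suc a)) * (\<Sum>i\<in>{1..a}. y i)
        - 2 * (\<Sum>l<D. K (Suc a) l * (\<Sum>i\<in>{1..a}. K i l * y i)) + (\<Sum>i\<in>{1..a}. sqC D (K i) * y i))"
    unfolding sqC_diff
    by (simp add: sum_distrib_left sum_distrib_right sum_subtractf sum.distrib algebra_simps
        sum.swap[of _ "{Suc 0..a}" "{..<D}"])
  finally show ?case
    unfolding Suc.IH
    by (simp add: sqC_add sqC_scale power2_eq_square sum_distrib_left sum.distrib algebra_simps)
qed

lemma Ftilde_eq_partial_momentum_form: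
  fixes a D :: nat and msq :: "nat \<Rightarrow> real" and p y :: "nat \<Rightarrow> complex"
    and k :: "nat \<Rightarrow> nat \<Rightarrow> complex" and x z w :: complex
  defines "S \<equiv> \<Sum>i\<in>{1..a}. y i"
    and "T \<equiv> \<Sum>i\<in>{1..a}. (complex_of_real (msq i) - sqC D (partial_momentum k i)) * y i"
    and "B \<equiv> \<lambda>l. \<Sum>i\<in>{1..a}. partial_momentum k i l * y i"
    and "c \<equiv> complex_of_real (msq (a+1)) * x + complex_of_real (msq (a+2)) * z"
  shows "Ftilde a D msq p k y x z w =
    ((z + x) * S + z * x * w) * (T + c * w) + (z + x) * sqC D B
      - z * x * w * (sqC D p * S + 2 * (\<Sum>l<D. p l * B l))"
proof -
  define A where "A = (\<Sum>i\<in>{1..a}. sqC D (partial_momentum k i) * y i)"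
  have T: "T = (\<Sum>i\<in>{1..a}. complex_of_real (msq i) * y i) - A"
    unfolding T_def A_def by (simp add: sum_subtractf algebra_simps)
  have pairs: "(\<Sum>(i,j)\<in>{(i,j). 1 \<le> i \<and> i < j \<and> j \<le> a}. qsq D k i j * y i * y j) = A * S - sqC D B"
  proof -
    have "(\<Sum>(i,j)\<in>{(i,j). 1 \<le> i \<and> i < j \<and> j \<le> a}. qsq D k i j * y i * y j) =
      (\<Sum>(i,j)\<in>{(i,j). 1 \<le> i \<and> i < j \<and> j \<le> a}.
         sqC D (\<lambda>l. partial_momentum k j l - partial_momentum k i l) * y i * y j)"
      by (rule sum.cong) (auto simp: qsq_eq_sqC_partial_momentum)
    then show ?thesis unfolding sum_pairs_sqC_diff A_def S_def B_def .
  qed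
  have masses: "(\<Sum>j\<in>{1..a}. rsq D p k j * y j) = sqC D p * S + 2 * (\<Sum>l<D. p l * B l) + A"
    unfolding rsq_eq_sqC_partial_momentum S_def A_def B_def
    by (simp add: sum.distrib sum_distrib_left sum_distrib_right algebra_simps
        sum.swap[of _ "{Suc 0..a}" "{..<D}"])
  show ?thesis
    unfolding Ftilde_def Let_def pairs masses T S_def[symmetric] c_def
    by (simp add: algebra_simps)
qed

definition fibre_linform :: "nat \<Rightarrow> nat \<Rightarrow> (nat \<Rightarrow> real) \<Rightarrow> (nat \<Rightarrow> nat \<Rightarrow> complex)
    \<Rightarrow> nat \<Rightarrow> (nat \<Rightarrow> complex) \<Rightarrow> complex \<Rightarrow> complex" where
  "fibre_linform a D msq k \<beta> y w =
     (if \<beta> < D then \<Sum>i\<in>{1..a}. partial_momentum k i \<beta> * y i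
      else if \<beta> = D then \<Sum>i\<in>{1..a}. y i
      else if \<beta> = D + 1 then w
      else \<Sum>i\<in>{1..a}. (complex_of_real (msq i) - sqC D (partial_momentum k i)) * y i)"

(* The parameters s, P, c stand for x + z, x z and m_(a+1)^2 x + m_(a+2)^2 z. *)
definition fibre_coeff :: "nat \<Rightarrow> (nat \<Rightarrow> complex) \<Rightarrow> complex \<Rightarrow> complex \<Rightarrow> complex
    \<Rightarrow> nat \<Rightarrow> nat \<Rightarrow> complex" where
  "fibre_coeff D p s P c \<alpha> \<beta> =
     (if \<alpha> < D then (if \<beta> = \<alpha> then s else 0)
      else if \<alpha> = D then (if \<beta> = D + 1 then s * c - P * sqC D p else if \<beta> = D + 2 then s else 0)
      else if \<alpha> = D + 1 then
        (if \<beta> < D then - 2 * P * p \<beta> else if \<beta> = D + 1 then P * c else if \<beta> = D + 2 then P else 0)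
      else 0)"

lemma fibre_linform_add:
  "fibre_linform a D msq k \<beta> (\<lambda>i. y i + y' i) (w + w')
     = fibre_linform a D msq k \<beta> y w + fibre_linform a D msq k \<beta> y' w'"
  unfolding fibre_linform_def by (simp add: sum.distrib distrib_left)

lemma quadratic_form_fibre_coeff:
  fixes L :: "nat \<Rightarrow> complex"
  shows "(\<Sum>\<alpha><D+3. L \<alpha> * (\<Sum>\<beta><D+3. fibre_coeff D p s P c \<alpha> \<beta> * L \<beta>))
    = (s * L D + P * L (D+1)) * (L (D+2) + c * L (D+1)) + s * (\<Sum>l<D. L l * L l)
      - P * L (D+1) * (sqC D p * L D + 2 * (\<Sum>l<D. p l * L l))"
proof -
  have sum_D3: "(\<Sum>\<beta><D+3. f \<beta>) = (\<Sum>\<beta><D. f \<beta>) + f D + f (D+1) + f (D+2)" for f :: "nat \<Rightarrow> complex"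
    by (simp add: numeral_3_eq_3 add_ac)
  let ?row = "\<lambda>\<alpha>. \<Sum>\<beta><D+3. fibre_coeff D p s P c \<alpha> \<beta> * L \<beta>"
  have row_small: "?row \<alpha> = s * L \<alpha>" if "\<alpha> < D" for \<alpha>
    using that by (simp add: sum_D3 fibre_coeff_def if_distrib[of "\<lambda>t. t * L _"] sum.delta
        cong: if_cong)
  have row_D: "?row D = (s * c - P * sqC D p) * L (D+1) + s * L (D+2)"
    by (simp add: sum_D3 fibre_coeff_def)
  have row_Suc_D: "?row (D+1) = - 2 * P * (\<Sum>l<D. p l * L l) + P * c * L (D+1) + P * L (D+2)"
    by (simp add: sum_D3 fibre_coeff_def sum_distrib_left sum_negf algebra_simps)
  have row_Suc_Suc_D: "?row (D+2) = 0"
    by (simp add: fibre_coeff_def)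
  have "(\<Sum>\<alpha><D+3. L \<alpha> * ?row \<alpha>)
      = (\<Sum>\<alpha><D. L \<alpha> * ?row \<alpha>) + L D * ?row D + L (D+1) * ?row (D+1) + L (D+2) * ?row (D+2)"
    by (rule sum_D3)
  also have "(\<Sum>\<alpha><D. L \<alpha> * ?row \<alpha>) = (\<Sum>l<D. s * (L l * L l))"
    by (rule sum.cong) (simp_all add: row_small)
  also have "\<dots> = s * (\<Sum>l<D. L l * L l)"
    by (rule sum_distrib_left[symmetric])
  finally show ?thesis
    unfolding row_D row_Suc_D row_Suc_Suc_D by (simp add: algebra_simps)
qed

lemma Ftilde_eq_quadratic_form_fibre_linform:
  "Ftilde a D msq p k y x z w =
    (\<Sum>\<alpha><D+3. fibre_linform a D msq k \<alpha> y w *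
       (\<Sum>\<beta><D+3. fibre_coeff D p (z + x) (z * x)
          (complex_of_real (msq (a+1)) * x + complex_of_real (msq (a+2)) * z) \<alpha> \<beta>
        * fibre_linform a D msq k \<beta> y w))"
proof -
  have "(\<Sum>l<D. fibre_linform a D msq k l y w * fibre_linform a D msq k l y w)
      = sqC D (\<lambda>l. \<Sum>i\<in>{1..a}. partial_momentum k i l * y i)"
    and "(\<Sum>l<D. p l * fibre_linform a D msq k l y w)
      = (\<Sum>l<D. p l * (\<Sum>i\<in>{1..a}. partial_momentum k i l * y i))"
    unfolding sqC_def by (auto simp: fibre_linform_def intro: sum.cong)
  then show ?thesis
    unfolding quadratic_form_fibre_coeff Ftilde_eq_partial_momentum_form
    by (simp add: fibre_linform_def)
qed

lemma rank_fibre_mat_le: "vec_space.rank (a+1) (fibre_mat a D msq p k x z) \<le> D + 3"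
  unfolding fibre_mat_def
  by (rule rank_polarization_le[where L="\<lambda>\<alpha> v. fibre_linform a D msq k \<alpha> (\<lambda>i. v (i - 1)) (v a)"])
    (simp_all add: fibre_form_def Ftilde_eq_quadratic_form_fibre_linform fibre_linform_add)

lemma fibre_corank_ge: "a - (D + 2) \<le> fibre_corank a D msq p k x z"
  using rank_fibre_mat_le[of a D msq p k x z] unfolding fibre_corank_def by linarith

lemma generic_corank_ge:
  assumes "\<And>x z. c \<le> fibre_corank a D msq p k x z"
  shows "c \<le> generic_corank a D msq p k"
proof -
  have "\<exists>c x z. (x, z) \<noteq> (0, 0) \<and> fibre_corank a D msq p k x z = c"
    by (intro exI[of _ "fibre_corank a D msq p k 1 0"] exI[of _ 1] exI[of _ 0]) simp
  from LeastI_ex[OF this] obtain x z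
    where "fibre_corank a D msq p k x z = generic_corank a D msq p k"
    unfolding generic_corank_def by blast
  then show ?thesis using assms by metis
qed

theorem proposition7p3:
  fixes a D :: nat and msq :: "nat \<Rightarrow> real"
    and p :: "nat \<Rightarrow> complex" and k :: "nat \<Rightarrow> nat \<Rightarrow> complex"
  assumes "a \<ge> 1" and "D \<ge> 1"
    and "\<And>i. 1 \<le> i \<Longrightarrow> i \<le> a + 2 \<Longrightarrow> msq i > 0"
    and "int D < int a - 3"
  shows "generic_corank a D msq p k \<ge> 1"
proof (rule generic_corank_ge)
  (* The rank bound holds for arbitrary masses. *)
  fix x z
  have "1 \<le> a - (D + 2)" using assms(4) by linarith
  also have "\<dots> \<le> fibre_corank a D msq p k x z" by (rule fibre_corank_ge)
  finally show "1 \<le> fibre_corank a D msq p k x z" .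
qed

end
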